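(* Consider the stochastic extra-momentum scheme (defined in the context) with non-negative parameters $\alpha,\gamma,\tau$ satisfying, for some constant $\theta\in(0,1]$, $$1+\alpha\mu-\gamma\ge1+\frac{\theta}{\kappa},\qquad\frac{\alpha}{\tau}=1+\frac{\theta}{\kappa},\qquad\frac{1}{8\tau^2L^2+2\gamma}\ge1+\frac{\theta}{\kappa}.$$ Then for every $k\ge0$, $$\mathbb E\big[\|z^k-z^*\|^2\big]\le2\Big(1+\frac{\theta}{\kappa}\Big)^{-k}\|z^0-z^*\|^2+\Big(\frac{\kappa}{\theta}+1\Big)\cdot32\tau^2\sigma^2+\frac{2\kappa\alpha\delta^2}{\theta\mu}.$$
   Context: Let $\mathcal Z\subseteq\mathbb R^n$ be a nonempty closed convex set. Let $F:\mathcal Z\to\mathbb R^n$ satisfy $(F(z)-F(z'))^\top(z-z')\ge\mu\|z-z'\|^2$ and $\|F(z)-F(z')\|\le L\|z-z'\|$ for all $z,z'\in\mathcal Z$, where $0<\mu\le L$; $\kappa=L/\mu$. Let $z^*$ be the unique point of $\mathcal Z$ with $F(z^* )^\top(z-z^* )\ge 0$ for all $z\in\mathcal Z$. $P_{\mathcal Z}$ denotes Euclidean projection onto $\mathcal Z$. A stochastic oracle returns $\hat F(z,\xi)$ for a random sample $\xi$, and satisfies, for every $z\in\mathcal Z$, $\mathbb E_\xi\|\hat F(z,\xi)-F(z)\|\le\delta$ and $\mathbb E_\xi\|\hat F(z,\xi)-F(z)\|^2\le\sigma^2$ for constants $\delta,\sigma\ge0$. Each oracle call $\hat F(z^j)$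 means $\hat F(z^j,\xi^j)$ with a fresh sample independent of all previous samples. The stochastic extra-momentum scheme: starting from $z^0\in\mathcal Z$ with $z^{-1}:=z^0$ and $\hat F(z^{-1}):=\hat F(z^0)$, for $k\ge0$, $z^{k+1}=P_{\mathcal Z}(z^k-\alpha\hat F(z^k)+\gamma(z^k-z^{k-1})-\tau(\hat F(z^k)-\hat F(z^{k-1})))$. *)

theory Defs
  imports "HOL-Analysis.Analysis" "HOL-Probability.Probability"
begin

text \<open>Iterates of the stochastic extra-momentum scheme along a sample path
  \<omega> :: nat \<Rightarrow> 'b, where \<omega> j is the fresh sample used by the oracle call at z^j.
  em_iter ... k = (z^k, z^(k-1)), with z^(-1) = z^0 and Fhat(z^(-1)) = Fhat(z^0) (same sample).\<close>

fun em_iter :: "'a::euclidean_space set \<Rightarrow> ('a \<Rightarrow> 'b \<Rightarrow> 'a) \<Rightarrow> real \<Rightarrow> real \<Rightarrow> real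
    \<Rightarrow> 'a \<Rightarrow> (nat \<Rightarrow> 'b) \<Rightarrow> nat \<Rightarrow> 'a \<times> 'a" where
  "em_iter Z Fh \<alpha> \<gamma> \<tau> z0 \<omega> 0 = (z0, z0)"
| "em_iter Z Fh \<alpha> \<gamma> \<tau> z0 \<omega> (Suc k) =
     (let (zk, zkm) = em_iter Z Fh \<alpha> \<gamma> \<tau> z0 \<omega> k;
          gk = Fh zk (\<omega> k);
          gkm = (if k = 0 then Fh zk (\<omega> 0) else Fh zkm (\<omega> (k - 1)))
      in (closest_point Z (zk - \<alpha> *\<^sub>R gk + \<gamma> *\<^sub>R (zk - zkm) - \<tau> *\<^sub>R (gk - gkm)), zk))"

definition em_z :: "'a::euclidean_space set \<Rightarrow> ('a \<Rightarrow> 'b \<Rightarrow> 'a) \<Rightarrow> real \<Rightarrow> real \<Rightarrow> real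
    \<Rightarrow> 'a \<Rightarrow> nat \<Rightarrow> (nat \<Rightarrow> 'b) \<Rightarrow> 'a" where
  "em_z Z Fh \<alpha> \<gamma> \<tau> z0 k \<omega> = fst (em_iter Z Fh \<alpha> \<gamma> \<tau> z0 \<omega> k)"

end

theory Submission
  imports Defs
begin

text \<open>With \<open>\<rho> = 1 + \<theta>/\<kappa>\<close> and \<open>\<alpha> = \<rho>\<tau>\<close>, the iteration is analysed through the Lyapunov function
  \<open>\<Phi>\<^sub>k = \<parallel>z\<^sub>k\<^sub>+\<^sub>1 - z\<^sup>*\<parallel>\<^sup>2 - 2\<tau>(F z\<^sub>k\<^sub>+\<^sub>1 - g\<^sub>k)\<cdot>(z\<^sub>k\<^sub>+\<^sub>1 - z\<^sup>*) + \<parallel>z\<^sub>k\<^sub>+\<^sub>1 - z\<^sub>k\<parallel>\<^sup>2/(2\<rho>)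
  + \<tau>\<mu>\<parallel>z\<^sub>k\<^sub>+\<^sub>1 - z\<^sup>*\<parallel>\<^sup>2 + 4\<tau>\<^sup>2\<parallel>g\<^sub>k - F z\<^sub>k\<parallel>\<^sup>2\<close>, where \<open>g\<^sub>k\<close> is the oracle answer at \<open>z\<^sub>k\<close>.
  The obtuse-angle property of the projection, strong monotonicity and Lipschitz continuity give
  the deterministic inequality \<open>\<rho>\<Phi>\<^sub>k\<^sub>+\<^sub>1 \<le> \<Phi>\<^sub>k + (noise terms)\<close>, and \<open>\<parallel>z\<^sub>k\<^sub>+\<^sub>1 - z\<^sup>*\<parallel>\<^sup>2 \<le> 2\<Phi>\<^sub>k\<close>.
  Integrating out only the newest sample, the noise terms have expectation at most
  \<open>\<tau>\<delta>\<^sup>2/\<mu> + O(\<tau>\<^sup>2\<sigma>\<^sup>2)\<close>, so \<open>E \<Phi>\<^sub>k\<close> contracts by the factor \<open>\<rho>\<close> down to a noise floor.\<close>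

section \<open>The one-step inequality for the Lyapunov function\<close>

lemma inner_le_half_sum_norm_sq:
  fixes x y :: "'a::real_inner"
  shows "2 * (x \<bullet> y) \<le> (norm x)\<^sup>2 + (norm y)\<^sup>2"
  unfolding dot_norm_neg[of x y] by simp

lemma norm_add_sq_le:
  fixes x y :: "'a::real_inner"
  shows "(norm (x + y))\<^sup>2 \<le> 2 * (norm x)\<^sup>2 + 2 * (norm y)\<^sup>2"
  using dot_norm[of x y] inner_le_half_sum_norm_sq[of x y] by (simp add: field_simps)

lemma neg_inner_le_norm_mult:
  fixes x y :: "'a::real_inner"
  shows "- (x \<bullet> y) \<le> norm x * norm y"
  using norm_cauchy_schwarz[of "- x" y] by simp

locale em_setting =
  fixes Z :: "'a::euclidean_space set" and F :: "'a \<Rightarrow> 'a"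
    and mu L al ga tau rho :: real and zs :: 'a
  assumes closed: "closed Z" and convex: "convex Z" and nonempty: "Z \<noteq> {}"
    and mu_pos: "0 < mu"
    and strongly_monotone: "\<forall>z\<in>Z. \<forall>z'\<in>Z. (F z - F z') \<bullet> (z - z') \<ge> mu * (norm (z - z'))\<^sup>2"
    and lipschitz: "\<forall>z\<in>Z. \<forall>z'\<in>Z. norm (F z - F z') \<le> L * norm (z - z')"
    and zs_in: "zs \<in> Z" and zs_solution: "\<forall>z\<in>Z. F zs \<bullet> (z - zs) \<ge> 0"
    and tau_pos: "0 < tau" and rho_gt_1: "1 < rho" and al_eq: "al = rho * tau" and ga_nonneg: "0 \<le> ga"
    and momentum_cond: "rho \<le> 1 + al * mu - ga"
    and step_size_cond: "8 * tau\<^sup>2 * L\<^sup>2 + 2 * ga \<le> 1 / rho"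
begin

definition step :: "'a \<Rightarrow> 'a \<Rightarrow> 'a \<Rightarrow> 'a \<Rightarrow> 'a" where
  "step z zm g gm = closest_point Z (z - al *\<^sub>R g + ga *\<^sub>R (z - zm) - tau *\<^sub>R (g - gm))"

text \<open>In \<open>potential zn z g\<close>, \<open>zn\<close> is the new iterate, \<open>z\<close> the one before and \<open>g\<close> the
  stochastic estimate of \<open>F z\<close> used to compute \<open>zn\<close>.\<close>

definition potential :: "'a \<Rightarrow> 'a \<Rightarrow> 'a \<Rightarrow> real" where
  "potential zn z g = (norm (zn - zs))\<^sup>2 - 2 * tau * ((F zn - g) \<bullet> (zn - zs)) + (norm (zn - z))\<^sup>2 / (2 * rho)"

definition lyapunov :: "'a \<Rightarrow> 'a \<Rightarrow> 'a \<Rightarrow> real" where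
  "lyapunov zn z g = potential zn z g + tau * mu * (norm (zn - zs))\<^sup>2 + 4 * tau\<^sup>2 * (norm (g - F z))\<^sup>2"

lemma step_in: "step z zm g gm \<in> Z"
  unfolding step_def by (rule closest_point_in_set[OF closed nonempty])

lemma F_inner_ge: "z \<in> Z \<Longrightarrow> F z \<bullet> (z - zs) \<ge> mu * (norm (z - zs))\<^sup>2"
  using strongly_monotone zs_in zs_solution by (fastforce simp: inner_diff_left)

lemma potential_step:
  assumes z: "z \<in> Z" and zm: "zm \<in> Z"
  shows "rho * potential (step z zm g gm) z g + al * mu * (norm (step z zm g gm - zs))\<^sup>2
     \<le> potential z zm gm - 2 * tau * ((g - F z) \<bullet> (z - zs)) + 2 * tau\<^sup>2 * (norm (g - gm))\<^sup>2
        - 4 * tau\<^sup>2 * L\<^sup>2 * (norm (z - zm))\<^sup>2"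
proof -
  define zn where "zn = step z zm g gm"
  define r where "r = z - zs"
  define rn where "rn = zn - zs"
  define d where "d = zn - z"
  define dm where "dm = z - zm"
  have rn: "rn = r + d" by (simp add: r_def rn_def d_def)
  have proj: "d \<bullet> rn + al * (g \<bullet> rn) - ga * (dm \<bullet> rn) + tau * ((g - gm) \<bullet> r) + tau * ((g - gm) \<bullet> d) \<le> 0"
  proof -
    have "(- (d + al *\<^sub>R g - ga *\<^sub>R dm + tau *\<^sub>R (g - gm))) \<bullet> (- rn) \<le> 0"
      using closest_point_dot[OF convex closed zs_in,
          of "z - al *\<^sub>R g + ga *\<^sub>R (z - zm) - tau *\<^sub>R (g - gm)"]
      by (simp add: zn_def step_def rn_def d_def dm_def algebra_simps)
    then show ?thesis by (simp add: rn inner_add_left inner_diff_left inner_add_right algebra_simps)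
  qed
  have polar: "2 * (d \<bullet> rn) = (norm rn)\<^sup>2 - (norm r)\<^sup>2 + (norm d)\<^sup>2"
    by (simp add: rn power2_norm_eq_inner inner_add_left inner_add_right inner_commute)
  have monotone: "2 * al * (F zn \<bullet> rn) \<ge> 2 * al * mu * (norm rn)\<^sup>2"
    using mult_left_mono[OF F_inner_ge[OF step_in], of "2 * al"] al_eq tau_pos rho_gt_1
    by (simp add: zn_def rn_def)
  have young_d: "- 2 * tau * ((g - gm) \<bullet> d) \<le> (norm d)\<^sup>2 / 2 + 2 * tau\<^sup>2 * (norm (g - gm))\<^sup>2"
  proof -
    have "(norm ((2 * tau) *\<^sub>R (gm - g)))\<^sup>2 = 4 * tau\<^sup>2 * (norm (g - gm))\<^sup>2"
      by (simp add: power_mult_distrib norm_minus_commute)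
    then have "2 * (((2 * tau) *\<^sub>R (gm - g)) \<bullet> d) \<le> 4 * tau\<^sup>2 * (norm (g - gm))\<^sup>2 + (norm d)\<^sup>2"
      using inner_le_half_sum_norm_sq[of "(2 * tau) *\<^sub>R (gm - g)" d] by simp
    then show ?thesis by (simp add: inner_diff_left algebra_simps)
  qed
  have young_dm: "2 * ga * (dm \<bullet> rn) \<le> ga * (norm dm)\<^sup>2 + ga * (norm rn)\<^sup>2"
    using mult_left_mono[OF inner_le_half_sum_norm_sq[of dm rn] ga_nonneg] by (simp add: algebra_simps)
  have cond1: "(rho - 1 + ga - al * mu) * (norm rn)\<^sup>2 \<le> 0"
    using momentum_cond by (intro mult_nonpos_nonneg) auto
  have cond2: "(ga + 4 * tau\<^sup>2 * L\<^sup>2 - 1 / (2 * rho)) * (norm dm)\<^sup>2 \<le> 0"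
    using step_size_cond by (intro mult_nonpos_nonneg) (auto simp: field_simps)
  have new: "potential zn z g = (norm rn)\<^sup>2 - 2 * tau * (F zn \<bullet> rn) + 2 * tau * (g \<bullet> rn) + (norm d)\<^sup>2 / (2 * rho)"
    by (simp add: potential_def rn_def d_def inner_diff_left algebra_simps)
  have old: "potential z zm gm - 2 * tau * ((g - F z) \<bullet> (z - zs))
      = (norm r)\<^sup>2 - 2 * tau * ((g - gm) \<bullet> r) + (norm dm)\<^sup>2 / (2 * rho)"
    by (simp add: potential_def r_def dm_def inner_diff_left algebra_simps)
  have rho_tau: "rho * (2 * tau * (F zn \<bullet> rn)) = 2 * al * (F zn \<bullet> rn)"
    "rho * (2 * tau * (g \<bullet> rn)) = 2 * al * (g \<bullet> rn)" "rho * ((norm d)\<^sup>2 / (2 * rho)) = (norm d)\<^sup>2 / 2"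
    using rho_gt_1 by (simp_all add: al_eq)
  have "rho * potential zn z g + al * mu * (norm rn)\<^sup>2
      \<le> potential z zm gm - 2 * tau * ((g - F z) \<bullet> (z - zs)) + 2 * tau\<^sup>2 * (norm (g - gm))\<^sup>2
        - 4 * tau\<^sup>2 * L\<^sup>2 * (norm dm)\<^sup>2"
    unfolding old new distrib_left right_diff_distrib rho_tau
    using proj polar young_d young_dm monotone cond1 cond2 by (simp add: algebra_simps)
  then show ?thesis by (simp add: zn_def rn_def dm_def)
qed

lemma potential_lower:
  assumes z: "z \<in> Z" and zp: "zp \<in> Z"
  shows "potential z zp g \<ge> (norm (z - zs))\<^sup>2 / 2 - 4 * tau\<^sup>2 * (norm (g - F zp))\<^sup>2"
proof -
  define R where "R = norm (z - zs)"
  define Dm where "Dm = norm (z - zp)"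
  define E where "E = norm (g - F zp)"
  have young: "2 * a * R \<le> R\<^sup>2 / 4 + 4 * a\<^sup>2" for a
    using inner_le_half_sum_norm_sq[of "R / 2" "2 * a"] by (simp add: power_mult_distrib power_divide) (simp add: algebra_simps)
  have lip: "(F z - F zp) \<bullet> (z - zs) \<le> L * Dm * R"
    using norm_cauchy_schwarz[of "F z - F zp" "z - zs"] lipschitz z zp
      mult_right_mono[of "norm (F z - F zp)" "L * Dm" R]
    by (auto simp: R_def Dm_def)
  have noise: "- ((g - F zp) \<bullet> (z - zs)) \<le> E * R"
    using neg_inner_le_norm_mult by (simp add: E_def R_def)
  have cond: "(4 * tau\<^sup>2 * L\<^sup>2 - 1 / (2 * rho)) * Dm\<^sup>2 \<le> 0"
    using step_size_cond ga_nonneg by (intro mult_nonpos_nonneg) (auto simp: field_simps)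
  have "potential z zp g = R\<^sup>2 - 2 * tau * ((F z - F zp) \<bullet> (z - zs))
      + 2 * tau * ((g - F zp) \<bullet> (z - zs)) + Dm\<^sup>2 / (2 * rho)"
    by (simp add: potential_def R_def Dm_def inner_diff_left algebra_simps)
  then show ?thesis
    using mult_left_mono[OF lip, of tau] mult_left_mono[OF noise, of tau] tau_pos
      young[of "tau * L * Dm"] young[of "tau * E"] cond
    unfolding R_def[symmetric] E_def[symmetric]
    by (simp add: power_mult_distrib algebra_simps)
qed

lemma lyapunov_lower:
  assumes "z \<in> Z" and "zp \<in> Z"
  shows "(norm (z - zs))\<^sup>2 \<le> 2 * lyapunov z zp g"
proof -
  have "0 \<le> tau * mu * (norm (z - zs))\<^sup>2" using tau_pos mu_pos by simp
  then show ?thesis using potential_lower[OF assms, of g] unfolding lyapunov_def by simp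
qed

lemma norm_estimate_diff_sq_le:
  assumes "z \<in> Z" and "zm \<in> Z"
  shows "(norm (g - gm))\<^sup>2 \<le> 2 * L\<^sup>2 * (norm (z - zm))\<^sup>2 + 4 * (norm (g - F z))\<^sup>2 + 4 * (norm (gm - F zm))\<^sup>2"
proof -
  have lip: "(norm (F z - F zm))\<^sup>2 \<le> L\<^sup>2 * (norm (z - zm))\<^sup>2"
    using power_mono[of "norm (F z - F zm)" "L * norm (z - zm)" 2] lipschitz assms
    by (simp add: power_mult_distrib)
  have split: "g - gm = (F z - F zm) + ((g - F z) + - (gm - F zm))" by simp
  have "(norm (g - gm))\<^sup>2 \<le> 2 * (norm (F z - F zm))\<^sup>2 + 2 * (norm ((g - F z) + - (gm - F zm)))\<^sup>2"
    unfolding split by (rule norm_add_sq_le)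
  also have "\<dots> \<le> 2 * (norm (F z - F zm))\<^sup>2 + 2 * (2 * (norm (g - F z))\<^sup>2 + 2 * (norm (gm - F zm))\<^sup>2)"
    using norm_add_sq_le[of "g - F z" "- (gm - F zm)"] by (simp add: norm_minus_commute)
  finally show ?thesis using lip by simp
qed

lemma lyapunov_step:
  assumes z: "z \<in> Z" and zm: "zm \<in> Z"
  shows "rho * lyapunov (step z zm g gm) z g + tau * mu * (norm (z - zs))\<^sup>2
     \<le> lyapunov z zm gm + 2 * tau * (norm (g - F z) * norm (z - zs))
        + (8 + 4 * rho) * tau\<^sup>2 * (norm (g - F z))\<^sup>2 + 4 * tau\<^sup>2 * (norm (gm - F zm))\<^sup>2"
proof -
  have cs: "- 2 * tau * ((g - F z) \<bullet> (z - zs)) \<le> 2 * tau * (norm (g - F z) * norm (z - zs))"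
    using mult_left_mono[OF neg_inner_le_norm_mult[of "g - F z" "z - zs"], of "2 * tau"] tau_pos
    by (simp add: algebra_simps)
  have estimate_diff: "2 * tau\<^sup>2 * (norm (g - gm))\<^sup>2
      \<le> 2 * tau\<^sup>2 * (2 * L\<^sup>2 * (norm (z - zm))\<^sup>2 + 4 * (norm (g - F z))\<^sup>2 + 4 * (norm (gm - F zm))\<^sup>2)"
    using norm_estimate_diff_sq_le[OF z zm, of g gm] by (intro mult_left_mono) auto
  have "rho * lyapunov (step z zm g gm) z g + tau * mu * (norm (z - zs))\<^sup>2
      = rho * potential (step z zm g gm) z g + al * mu * (norm (step z zm g gm - zs))\<^sup>2
        + 4 * rho * tau\<^sup>2 * (norm (g - F z))\<^sup>2 + tau * mu * (norm (z - zs))\<^sup>2"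
    unfolding lyapunov_def al_eq by (simp add: algebra_simps)
  also have "\<dots> \<le> potential z zm gm - 2 * tau * ((g - F z) \<bullet> (z - zs)) + 2 * tau\<^sup>2 * (norm (g - gm))\<^sup>2
        - 4 * tau\<^sup>2 * L\<^sup>2 * (norm (z - zm))\<^sup>2 + 4 * rho * tau\<^sup>2 * (norm (g - F z))\<^sup>2
        + tau * mu * (norm (z - zs))\<^sup>2"
    using potential_step[OF z zm, of g gm] by simp
  also have "\<dots> \<le> lyapunov z zm gm + 2 * tau * (norm (g - F z) * norm (z - zs))
        + (8 + 4 * rho) * tau\<^sup>2 * (norm (g - F z))\<^sup>2 + 4 * tau\<^sup>2 * (norm (gm - F zm))\<^sup>2"
    using cs estimate_diff by (simp add: lyapunov_def algebra_simps)
  finally show ?thesis .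
qed

lemma lyapunov_first_step:
  assumes z: "z \<in> Z"
  shows "rho * lyapunov (step z z g g) z g \<le> (norm (z - zs))\<^sup>2 + 4 * rho * tau\<^sup>2 * (norm (g - F z))\<^sup>2"
proof -
  have "potential z z g - 2 * tau * ((g - F z) \<bullet> (z - zs)) = (norm (z - zs))\<^sup>2"
    unfolding potential_def by (simp add: inner_diff_left algebra_simps)
  moreover have "rho * lyapunov (step z z g g) z g = rho * potential (step z z g g) z g
      + al * mu * (norm (step z z g g - zs))\<^sup>2 + 4 * rho * tau\<^sup>2 * (norm (g - F z))\<^sup>2"
    unfolding lyapunov_def al_eq by (simp add: algebra_simps)
  ultimately show ?thesis using potential_step[OF z z, of g g] by simp
qed

end

section \<open>Bounds for nonnegative integrals\<close>

lemma nn_integral_PiM_split_coordinate: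
  assumes M: "\<And>i. i \<in> I \<Longrightarrow> prob_space (M i)" and k: "k \<in> I"
    and f: "f \<in> borel_measurable (\<Pi>\<^sub>M i\<in>I. M i)"
  shows "(\<integral>\<^sup>+ \<omega>. f \<omega> \<partial>(\<Pi>\<^sub>M i\<in>I. M i))
       = (\<integral>\<^sup>+ \<omega>. (\<integral>\<^sup>+ \<xi>. f (fun_upd \<omega> k \<xi>) \<partial>(M k)) \<partial>(\<Pi>\<^sub>M i\<in>I. M i))"
proof -
  let ?P = "\<Pi>\<^sub>M i\<in>I. M i"
  interpret Mk: prob_space "M k" using M k .
  interpret P: prob_space ?P using M by (rule prob_space_PiM)
  interpret pair_sigma_finite "M k" ?P by unfold_locales
  have "(\<lambda>p. (snd p)(k := fst p)) \<in> measurable (M k \<Otimes>\<^sub>M ?P) ?P"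
    by (rule measurable_fun_upd[where J=I]) (use k in auto)
  then have upd: "(\<lambda>(x, X). X(k := x)) \<in> measurable (M k \<Otimes>\<^sub>M ?P) ?P"
    by (simp add: case_prod_beta')
  have "?P = distr (M k \<Otimes>\<^sub>M ?P) ?P (\<lambda>(x, X). X(k := x))"
    using distr_pair_PiM_eq_PiM[of I M k] M k by (simp add: insert_absorb)
  then have "(\<integral>\<^sup>+ \<omega>. f \<omega> \<partial>?P) = (\<integral>\<^sup>+ p. f ((\<lambda>(x, X). X(k := x)) p) \<partial>(M k \<Otimes>\<^sub>M ?P))"
    using nn_integral_distr[OF upd] f by simp
  also have "\<dots> = (\<integral>\<^sup>+ X. (\<integral>\<^sup>+ x. f (fun_upd X k x) \<partial>(M k)) \<partial>?P)"
    using nn_integral_snd[OF measurable_comp[OF upd f]] by (simp add: comp_def case_prod_beta')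
  finally show ?thesis .
qed

lemma (in prob_space) nn_integral_linear_le:
  assumes [measurable]: "f \<in> borel_measurable M" "h \<in> borel_measurable M"
    and nonneg: "\<And>x. x \<in> space M \<Longrightarrow> 0 \<le> f x" "\<And>x. x \<in> space M \<Longrightarrow> 0 \<le> h x"
    and a: "0 \<le> a" and b: "0 \<le> b" and s: "0 \<le> s" and t: "0 \<le> t"
    and f_le: "(\<integral>\<^sup>+ x. ennreal (f x) \<partial>M) \<le> ennreal s"
    and h_le: "(\<integral>\<^sup>+ x. ennreal (h x) \<partial>M) \<le> ennreal t"
  shows "(\<integral>\<^sup>+ x. ennreal (a * f x + b * h x) \<partial>M) \<le> ennreal (a * s + b * t)"
proof -
  have "(\<integral>\<^sup>+ x. ennreal (a * f x + b * h x) \<partial>M)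
      = (\<integral>\<^sup>+ x. (ennreal a * ennreal (f x) + ennreal b * ennreal (h x)) \<partial>M)"
    using nonneg a b by (intro nn_integral_cong) (simp add: ennreal_mult ennreal_plus)
  also have "\<dots> = ennreal a * (\<integral>\<^sup>+ x. ennreal (f x) \<partial>M) + ennreal b * (\<integral>\<^sup>+ x. ennreal (h x) \<partial>M)"
    by (subst nn_integral_add) (auto simp: nn_integral_cmult)
  also have "\<dots> \<le> ennreal a * ennreal s + ennreal b * ennreal t"
    using f_le h_le by (intro add_mono mult_left_mono) auto
  also have "\<dots> = ennreal (a * s + b * t)"
    using a b s t by (simp add: ennreal_mult ennreal_plus)
  finally show ?thesis .
qed

lemma (in prob_space) nn_integral_affine_le:
  assumes "f \<in> borel_measurable M" and "\<And>x. x \<in> space M \<Longrightarrow> 0 \<le> f x"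
    and "0 \<le> a" and "0 \<le> b" and "0 \<le> s" and "(\<integral>\<^sup>+ x. ennreal (f x) \<partial>M) \<le> ennreal s"
  shows "(\<integral>\<^sup>+ x. ennreal (a + b * f x) \<partial>M) \<le> ennreal (a + b * s)"
  using nn_integral_linear_le[of "\<lambda>_. 1" f a b 1 s] assms by (simp add: emeasure_space_1)

text \<open>The constant \<open>A\<close> may be negative, so it cannot be pulled out of the integral
  directly; \<open>max 0 (- A)\<close> is added on both sides instead.\<close>

lemma (in prob_space) nn_integral_add_real_const_le:
  assumes B[measurable]: "B \<in> borel_measurable M"
    and nonneg: "\<And>x. x \<in> space M \<Longrightarrow> 0 \<le> B x"
    and pos: "\<And>x. x \<in> space M \<Longrightarrow> 0 \<le> A + B x"
    and B_le: "(\<integral>\<^sup>+ x. ennreal (B x) \<partial>M) \<le> ennreal b" and b: "0 \<le> b"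
  shows "(\<integral>\<^sup>+ x. ennreal (A + B x) \<partial>M) \<le> ennreal (A + b)"
proof -
  define X where "X = (\<integral>\<^sup>+ x. ennreal (A + B x) \<partial>M)"
  have "X + ennreal (max 0 (- A)) = (\<integral>\<^sup>+ x. (ennreal (A + B x) + ennreal (max 0 (- A))) \<partial>M)"
    unfolding X_def by (subst nn_integral_add) (auto simp: emeasure_space_1)
  also have "\<dots> = (\<integral>\<^sup>+ x. (ennreal (max 0 A) + ennreal (B x)) \<partial>M)"
  proof (intro nn_integral_cong)
    fix x assume "x \<in> space M"
    then have "0 \<le> A + B x" "0 \<le> B x" using pos nonneg by auto
    then show "ennreal (A + B x) + ennreal (max 0 (- A)) = ennreal (max 0 A) + ennreal (B x)"
      by (simp add: ennreal_plus[symmetric] max_def del: ennreal_plus)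
  qed
  also have "\<dots> = ennreal (max 0 A) + (\<integral>\<^sup>+ x. ennreal (B x) \<partial>M)"
    by (subst nn_integral_add) (auto simp: emeasure_space_1)
  also have "\<dots> \<le> ennreal (max 0 A) + ennreal b"
    using B_le by (rule add_left_mono)
  also have "\<dots> = ennreal (max 0 A + b)"
    by (rule ennreal_plus[symmetric]) (use b in auto)
  finally have bound: "X + ennreal (max 0 (- A)) \<le> ennreal (max 0 A + b)" .
  show ?thesis
  proof (cases X)
    case (real x)
    have "ennreal (x + max 0 (- A)) = X + ennreal (max 0 (- A))"
      using real ennreal_plus[of x "max 0 (- A)"] by simp
    with bound have "ennreal (x + max 0 (- A)) \<le> ennreal (max 0 A + b)" by simp
    then have "x + max 0 (- A) \<le> max 0 A + b"
      using b by (subst (asm) ennreal_le_iff) auto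
    then have "x \<le> A + b" by (simp add: max_def split: if_splits)
    then show ?thesis using real by (simp add: X_def[symmetric])
  next
    case top
    then show ?thesis using bound by (simp add: top_unique)
  qed
qed

section \<open>The iterates as functions of the sample path\<close>

lemma em_z_0 [simp]: "em_z Z Fh \<alpha> \<gamma> \<tau> z0 0 \<omega> = z0"
  by (simp add: em_z_def)

lemma em_iter_snd: "snd (em_iter Z Fh \<alpha> \<gamma> \<tau> z0 \<omega> k) = em_z Z Fh \<alpha> \<gamma> \<tau> z0 (k - 1) \<omega>"
  by (cases k) (simp_all add: em_z_def Let_def case_prod_beta)

text \<open>With truncated subtraction \<open>k - 1\<close>, the convention \<open>z\<^sup>-\<^sup>1 = z\<^sup>0\<close> of the scheme makes
  the recursion uniform in \<open>k\<close>.\<close>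

lemma em_z_Suc:
  "em_z Z Fh \<alpha> \<gamma> \<tau> z0 (Suc k) \<omega> =
    (let z = em_z Z Fh \<alpha> \<gamma> \<tau> z0 k \<omega>; zm = em_z Z Fh \<alpha> \<gamma> \<tau> z0 (k - 1) \<omega>;
         g = Fh z (\<omega> k); gm = Fh zm (\<omega> (k - 1))
     in closest_point Z (z - \<alpha> *\<^sub>R g + \<gamma> *\<^sub>R (z - zm) - \<tau> *\<^sub>R (g - gm)))"
proof -
  have "fst (em_iter Z Fh \<alpha> \<gamma> \<tau> z0 \<omega> k) = em_z Z Fh \<alpha> \<gamma> \<tau> z0 k \<omega>" by (simp add: em_z_def)
  then show ?thesis
    using em_iter_snd[of Z Fh \<alpha> \<gamma> \<tau> z0 \<omega> k]
    by (cases "em_iter Z Fh \<alpha> \<gamma> \<tau> z0 \<omega> k") (auto simp: em_z_def Let_def)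
qed

lemma em_z_in:
  assumes "closed Z" "Z \<noteq> {}" "z0 \<in> Z"
  shows "em_z Z Fh \<alpha> \<gamma> \<tau> z0 k \<omega> \<in> Z"
  using assms by (cases k) (auto simp: em_z_Suc Let_def closest_point_in_set)

lemma em_iter_cong:
  "(\<And>j. j < k \<Longrightarrow> \<omega> j = \<omega>' j) \<Longrightarrow> em_iter Z Fh \<alpha> \<gamma> \<tau> z0 \<omega> k = em_iter Z Fh \<alpha> \<gamma> \<tau> z0 \<omega>' k"
proof (induction k)
  case (Suc k)
  then have "em_iter Z Fh \<alpha> \<gamma> \<tau> z0 \<omega> k = em_iter Z Fh \<alpha> \<gamma> \<tau> z0 \<omega>' k" by simp
  then show ?case using Suc.prems by (simp add: Let_def cong: if_cong)
qed simp

lemma em_z_fun_upd: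
  "k \<le> j \<Longrightarrow> em_z Z Fh \<alpha> \<gamma> \<tau> z0 k (fun_upd \<omega> j \<xi>) = em_z Z Fh \<alpha> \<gamma> \<tau> z0 k \<omega>"
  unfolding em_z_def by (subst em_iter_cong[of k _ \<omega>]) auto

lemma measurable_sample_eval:
  assumes Fh: "(\<lambda>p. Fh (fst p) (snd p)) \<in> borel_measurable (borel \<Otimes>\<^sub>M D)"
    and f: "f \<in> borel_measurable (\<Pi>\<^sub>M i\<in>I. D)" and j: "j \<in> I"
  shows "(\<lambda>\<omega>. Fh (f \<omega>) (\<omega> j)) \<in> borel_measurable (\<Pi>\<^sub>M i\<in>I. D)"
proof -
  have "(\<lambda>\<omega>. (f \<omega>, \<omega> j)) \<in> measurable (\<Pi>\<^sub>M i\<in>I. D) (borel \<Otimes>\<^sub>M D)"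
    using f j by (intro measurable_Pair measurable_component_singleton) auto
  from measurable_compose[OF this Fh] show ?thesis by simp
qed

lemma measurable_em_z:
  assumes Z: "closed Z" "convex Z" "Z \<noteq> {}"
    and Fh: "(\<lambda>p. Fh (fst p) (snd p)) \<in> borel_measurable (borel \<Otimes>\<^sub>M D)"
  shows "em_z Z Fh \<alpha> \<gamma> \<tau> z0 k \<in> borel_measurable (\<Pi>\<^sub>M j\<in>UNIV. D)"
proof (induction k rule: less_induct)
  case (less k)
  show ?case
  proof (cases k)
    case (Suc k')
    have prev[measurable]: "em_z Z Fh \<alpha> \<gamma> \<tau> z0 k' \<in> borel_measurable (\<Pi>\<^sub>M j\<in>UNIV. D)"
      "em_z Z Fh \<alpha> \<gamma> \<tau> z0 (k' - 1) \<in> borel_measurable (\<Pi>\<^sub>M j\<in>UNIV. D)"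
      using less Suc by auto
    have [measurable (raw)]: "f \<in> borel_measurable M \<Longrightarrow> (\<lambda>x. closest_point Z (f x)) \<in> borel_measurable M"
      for f and M :: "'c measure"
      by (rule borel_measurable_continuous_on[OF continuous_on_closest_point[OF Z(2,1,3)]])
    have [measurable]: "(\<lambda>\<omega>. Fh (em_z Z Fh \<alpha> \<gamma> \<tau> z0 k' \<omega>) (\<omega> j)) \<in> borel_measurable (\<Pi>\<^sub>M j\<in>UNIV. D)"
      "(\<lambda>\<omega>. Fh (em_z Z Fh \<alpha> \<gamma> \<tau> z0 (k' - 1) \<omega>) (\<omega> j)) \<in> borel_measurable (\<Pi>\<^sub>M j\<in>UNIV. D)"
      for j
      by (rule measurable_sample_eval[OF Fh prev(1) UNIV_I], rule measurable_sample_eval[OF Fh prev(2) UNIV_I])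
    show ?thesis
      unfolding Suc em_z_Suc[abs_def] Let_def by measurable
  qed (simp add: em_z_def)
qed

section \<open>Expected decay of the Lyapunov function\<close>

lemma ennreal_le_divide_of_mult_le:
  assumes "ennreal a * x \<le> ennreal b" and "0 < a" and "0 \<le> b"
  shows "x \<le> ennreal (b / a)"
proof -
  have "x = ennreal (1 / a) * (ennreal a * x)"
    using assms(2) by (simp add: mult.assoc[symmetric] ennreal_mult[symmetric] del: ennreal_mult)
  also have "\<dots> \<le> ennreal (1 / a) * ennreal b"
    using assms(1) by (rule mult_left_mono) simp
  also have "\<dots> = ennreal (b / a)"
    using assms(2,3) by (simp add: ennreal_mult[symmetric] del: ennreal_mult)
  finally show ?thesis .
qed

locale em_stochastic = em_setting +
  fixes D :: "'b measure" and Fh :: "'a \<Rightarrow> 'b \<Rightarrow> 'a" and z0 :: 'a and delta sigma :: real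
  assumes prob_space_D: "prob_space D"
    and F_continuous: "continuous_on UNIV F"
    and Fh_measurable: "(\<lambda>p. Fh (fst p) (snd p)) \<in> borel_measurable (borel \<Otimes>\<^sub>M D)"
    and delta_nonneg: "0 \<le> delta" and sigma_nonneg: "0 \<le> sigma"
    and noise_first_moment: "\<forall>z\<in>Z. (\<integral>\<^sup>+ \<xi>. ennreal (norm (Fh z \<xi> - F z)) \<partial>D) \<le> ennreal delta"
    and noise_second_moment: "\<forall>z\<in>Z. (\<integral>\<^sup>+ \<xi>. ennreal ((norm (Fh z \<xi> - F z))\<^sup>2) \<partial>D) \<le> ennreal (sigma\<^sup>2)"
    and z0_in: "z0 \<in> Z"
begin

abbreviation paths :: "(nat \<Rightarrow> 'b) measure" where
  "paths \<equiv> \<Pi>\<^sub>M j\<in>UNIV. D"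

sublocale D: prob_space D
  by (rule prob_space_D)

sublocale paths: prob_space paths
  by (intro prob_space_PiM prob_space_D)

abbreviation iter :: "nat \<Rightarrow> (nat \<Rightarrow> 'b) \<Rightarrow> 'a" where
  "iter k \<omega> \<equiv> em_z Z Fh al ga tau z0 k \<omega>"

definition estimate :: "nat \<Rightarrow> (nat \<Rightarrow> 'b) \<Rightarrow> 'a" where
  "estimate k \<omega> = Fh (iter k \<omega>) (\<omega> k)"

definition noise_sq :: "nat \<Rightarrow> (nat \<Rightarrow> 'b) \<Rightarrow> real" where
  "noise_sq k \<omega> = (norm (estimate k \<omega> - F (iter k \<omega>)))\<^sup>2"

definition lyapunov_at :: "nat \<Rightarrow> (nat \<Rightarrow> 'b) \<Rightarrow> real" where
  "lyapunov_at k \<omega> = lyapunov (iter (Suc k) \<omega>) (iter k \<omega>) (estimate k \<omega>)"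

text \<open>\<open>(rho - 1) * noise_floor\<close> dominates the noise added in one step of the expected Lyapunov
  recursion, so the floor survives the contraction by \<open>rho\<close>.\<close>

definition noise_floor :: real where
  "noise_floor = (tau * delta\<^sup>2 / mu + (16 + 8 * (rho - 1)) * tau\<^sup>2 * sigma\<^sup>2) / (rho - 1)"

lemma iter_in: "iter k \<omega> \<in> Z"
  by (rule em_z_in[OF closed nonempty z0_in])

lemma iter_Suc: "iter (Suc k) \<omega> = step (iter k \<omega>) (iter (k - 1) \<omega>) (estimate k \<omega>) (estimate (k - 1) \<omega>)"
  by (simp add: em_z_Suc step_def estimate_def Let_def)

lemma F_measurable[measurable (raw)]:
  "f \<in> borel_measurable M \<Longrightarrow> (\<lambda>x. F (f x)) \<in> borel_measurable M"
  by (rule borel_measurable_continuous_on[OF F_continuous])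

lemma iter_measurable[measurable]: "iter k \<in> borel_measurable paths"
  by (rule measurable_em_z[OF closed convex nonempty Fh_measurable])

lemma estimate_measurable[measurable]: "estimate k \<in> borel_measurable paths"
  unfolding estimate_def[abs_def] by (rule measurable_sample_eval[OF Fh_measurable iter_measurable UNIV_I])

lemma noise_sq_measurable[measurable]: "noise_sq k \<in> borel_measurable paths"
  unfolding noise_sq_def[abs_def] by measurable

lemma lyapunov_at_measurable[measurable]: "lyapunov_at k \<in> borel_measurable paths"
  unfolding lyapunov_at_def[abs_def] lyapunov_def potential_def by measurable

lemma sample_eval_measurable[measurable]: "Fh z \<in> borel_measurable D"
proof -
  have "(\<lambda>\<xi>. (z, \<xi>)) \<in> measurable D (borel \<Otimes>\<^sub>M D)" by measurable
  from measurable_compose[OF this Fh_measurable] show ?thesis by simp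
qed

lemma noise_sq_nonneg: "0 \<le> noise_sq k \<omega>"
  by (simp add: noise_sq_def)

lemma dist_sq_le_lyapunov_at: "(norm (iter (Suc k) \<omega> - zs))\<^sup>2 \<le> 2 * lyapunov_at k \<omega>"
  unfolding lyapunov_at_def by (rule lyapunov_lower[OF iter_in iter_in])

lemma lyapunov_at_nonneg: "0 \<le> lyapunov_at k \<omega>"
  using dist_sq_le_lyapunov_at[of k \<omega>] zero_le_power2[of "norm (iter (Suc k) \<omega> - zs)"] by linarith

lemma lyapunov_at_0_le:
  "rho * lyapunov_at 0 \<omega> \<le> (norm (z0 - zs))\<^sup>2 + 4 * rho * tau\<^sup>2 * noise_sq 0 \<omega>"
  using lyapunov_first_step[OF z0_in, of "estimate 0 \<omega>"]
  by (simp add: lyapunov_at_def noise_sq_def iter_Suc)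

lemma lyapunov_at_Suc_le:
  "rho * lyapunov_at (Suc k) \<omega> + tau * mu * (norm (iter (Suc k) \<omega> - zs))\<^sup>2
    \<le> lyapunov_at k \<omega> + 2 * tau * (norm (estimate (Suc k) \<omega> - F (iter (Suc k) \<omega>)) * norm (iter (Suc k) \<omega> - zs))
      + (8 + 4 * rho) * tau\<^sup>2 * noise_sq (Suc k) \<omega> + 4 * tau\<^sup>2 * noise_sq k \<omega>"
  using lyapunov_step[OF iter_in iter_in, of "Suc k" \<omega> k \<omega> "estimate (Suc k) \<omega>" "estimate k \<omega>"]
  by (simp add: lyapunov_at_def noise_sq_def iter_Suc[of "Suc k"])

lemma expected_noise_sq_le: "(\<integral>\<^sup>+ \<omega>. ennreal (noise_sq k \<omega>) \<partial>paths) \<le> ennreal (sigma\<^sup>2)"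
proof -
  have "(\<integral>\<^sup>+ \<omega>. ennreal (noise_sq k \<omega>) \<partial>paths)
      = (\<integral>\<^sup>+ \<omega>. (\<integral>\<^sup>+ \<xi>. ennreal (noise_sq k (fun_upd \<omega> k \<xi>)) \<partial>D) \<partial>paths)"
    by (rule nn_integral_PiM_split_coordinate) (auto intro: prob_space_D)
  also have "\<dots> \<le> (\<integral>\<^sup>+ \<omega>. ennreal (sigma\<^sup>2) \<partial>paths)"
  proof (rule nn_integral_mono)
    fix \<omega>
    have "noise_sq k (fun_upd \<omega> k \<xi>) = (norm (Fh (iter k \<omega>) \<xi> - F (iter k \<omega>)))\<^sup>2" for \<xi>
      by (simp add: noise_sq_def estimate_def em_z_fun_upd)
    then show "(\<integral>\<^sup>+ \<xi>. ennreal (noise_sq k (fun_upd \<omega> k \<xi>)) \<partial>D) \<le> ennreal (sigma\<^sup>2)"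
      using noise_second_moment iter_in by simp
  qed
  finally show ?thesis by (simp add: paths.emeasure_space_1)
qed


lemma conditional_lyapunov_at_Suc_le:
  "(\<integral>\<^sup>+ \<xi>. ennreal (rho * lyapunov_at (Suc k) (fun_upd \<omega> (Suc k) \<xi>)) \<partial>D)
    \<le> ennreal (lyapunov_at k \<omega> + 4 * tau\<^sup>2 * noise_sq k \<omega> + tau * delta\<^sup>2 / mu + (8 + 4 * rho) * tau\<^sup>2 * sigma\<^sup>2)"
proof -
  define z where "z = iter (Suc k) \<omega>"
  define r where "r = norm (z - zs)"
  define a where "a = (\<lambda>\<xi>. norm (Fh z \<xi> - F z))"
  define A where "A = lyapunov_at k \<omega> + 4 * tau\<^sup>2 * noise_sq k \<omega> - tau * mu * r\<^sup>2"
  define B where "B = (\<lambda>\<xi>. (2 * tau * r) * a \<xi> + ((8 + 4 * rho) * tau\<^sup>2) * (a \<xi>)\<^sup>2)"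
  have zZ: "z \<in> Z" by (simp add: z_def iter_in)
  have a_measurable[measurable]: "a \<in> borel_measurable D" unfolding a_def by measurable
  have B_nonneg: "0 \<le> B \<xi>" for \<xi> using tau_pos rho_gt_1 by (simp add: B_def r_def a_def)
  have pointwise: "rho * lyapunov_at (Suc k) (fun_upd \<omega> (Suc k) \<xi>) \<le> A + B \<xi>" for \<xi>
  proof -
    have upd: "iter (Suc k) (fun_upd \<omega> (Suc k) \<xi>) = z" "iter k (fun_upd \<omega> (Suc k) \<xi>) = iter k \<omega>"
      by (simp_all add: z_def em_z_fun_upd)
    then have "lyapunov_at k (fun_upd \<omega> (Suc k) \<xi>) = lyapunov_at k \<omega>"
      "noise_sq k (fun_upd \<omega> (Suc k) \<xi>) = noise_sq k \<omega>"
      "noise_sq (Suc k) (fun_upd \<omega> (Suc k) \<xi>) = (a \<xi>)\<^sup>2"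
      "estimate (Suc k) (fun_upd \<omega> (Suc k) \<xi>) = Fh z \<xi>"
      by (simp_all add: lyapunov_at_def noise_sq_def estimate_def a_def z_def)
    with lyapunov_at_Suc_le[of k "fun_upd \<omega> (Suc k) \<xi>"]
    show ?thesis by (simp add: A_def B_def a_def r_def upd(1) algebra_simps)
  qed
  have B_le: "(\<integral>\<^sup>+ \<xi>. ennreal (B \<xi>) \<partial>D) \<le> ennreal ((2 * tau * r) * delta + ((8 + 4 * rho) * tau\<^sup>2) * sigma\<^sup>2)"
    unfolding B_def
    using noise_first_moment noise_second_moment zZ tau_pos rho_gt_1 delta_nonneg
    by (intro D.nn_integral_linear_le) (auto simp: a_def r_def)
  have "(\<integral>\<^sup>+ \<xi>. ennreal (rho * lyapunov_at (Suc k) (fun_upd \<omega> (Suc k) \<xi>)) \<partial>D)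
      \<le> (\<integral>\<^sup>+ \<xi>. ennreal (A + B \<xi>) \<partial>D)"
    by (intro nn_integral_mono ennreal_leI pointwise)
  also have "\<dots> \<le> ennreal (A + ((2 * tau * r) * delta + ((8 + 4 * rho) * tau\<^sup>2) * sigma\<^sup>2))"
  proof (rule D.nn_integral_add_real_const_le[OF _ B_nonneg _ B_le])
    show "B \<in> borel_measurable D" unfolding B_def by measurable
    show "0 \<le> A + B \<xi>" for \<xi>
      using pointwise[of \<xi>] lyapunov_at_nonneg[of "Suc k" "fun_upd \<omega> (Suc k) \<xi>"] rho_gt_1
      by (meson less_le_trans mult_nonneg_nonneg order_trans zero_less_one less_imp_le)
    show "0 \<le> 2 * tau * r * delta + (8 + 4 * rho) * tau\<^sup>2 * sigma\<^sup>2"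
      using tau_pos rho_gt_1 delta_nonneg by (simp add: r_def)
  qed
  also have "\<dots> \<le> ennreal (lyapunov_at k \<omega> + 4 * tau\<^sup>2 * noise_sq k \<omega> + tau * delta\<^sup>2 / mu + (8 + 4 * rho) * tau\<^sup>2 * sigma\<^sup>2)"
  proof (rule ennreal_leI)
    have "2 * r * delta - mu * r\<^sup>2 \<le> delta\<^sup>2 / mu"
      using mu_pos inner_le_half_sum_norm_sq[of "mu * r" delta]
      by (simp add: field_simps power2_eq_square)
    from mult_left_mono[OF this, of tau] tau_pos
    show "A + (2 * tau * r * delta + (8 + 4 * rho) * tau\<^sup>2 * sigma\<^sup>2)
        \<le> lyapunov_at k \<omega> + 4 * tau\<^sup>2 * noise_sq k \<omega> + tau * delta\<^sup>2 / mu + (8 + 4 * rho) * tau\<^sup>2 * sigma\<^sup>2"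
      by (simp add: A_def algebra_simps)
  qed
  finally show ?thesis .
qed


lemma noise_floor_nonneg: "0 \<le> noise_floor"
  using rho_gt_1 tau_pos mu_pos by (simp add: noise_floor_def)

lemma noise_floor_mult_eq:
  "(rho - 1) * noise_floor = tau * delta\<^sup>2 / mu + (16 + 8 * (rho - 1)) * tau\<^sup>2 * sigma\<^sup>2"
  using rho_gt_1 by (simp add: noise_floor_def)

lemma two_noise_floor_le: "2 * noise_floor \<le> (2 * al * delta\<^sup>2 / mu + 32 * rho * tau\<^sup>2 * sigma\<^sup>2) / (rho - 1)"
proof -
  have "tau * delta\<^sup>2 / mu \<le> al * delta\<^sup>2 / mu"
    using al_eq rho_gt_1 tau_pos mu_pos by (intro divide_right_mono mult_right_mono) auto
  moreover have "(16 + 8 * (rho - 1)) * tau\<^sup>2 * sigma\<^sup>2 \<le> 16 * rho * tau\<^sup>2 * sigma\<^sup>2"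
    using rho_gt_1 by (intro mult_right_mono) auto
  ultimately have "2 * (tau * delta\<^sup>2 / mu + (16 + 8 * (rho - 1)) * tau\<^sup>2 * sigma\<^sup>2)
      \<le> 2 * (al * delta\<^sup>2 / mu + 16 * rho * tau\<^sup>2 * sigma\<^sup>2)"
    by simp
  from divide_right_mono[OF this, of "rho - 1"] rho_gt_1 show ?thesis
    by (simp add: noise_floor_def mult.assoc)
qed

lemma expected_lyapunov_at_Suc_le:
  "ennreal rho * (\<integral>\<^sup>+ \<omega>. ennreal (lyapunov_at (Suc k) \<omega>) \<partial>paths)
    \<le> (\<integral>\<^sup>+ \<omega>. ennreal (lyapunov_at k \<omega>) \<partial>paths) + ennreal (tau * delta\<^sup>2 / mu + (12 + 4 * rho) * tau\<^sup>2 * sigma\<^sup>2)"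
proof -
  define c where "c = tau * delta\<^sup>2 / mu + (8 + 4 * rho) * tau\<^sup>2 * sigma\<^sup>2"
  have c: "0 \<le> c" using tau_pos mu_pos rho_gt_1 by (simp add: c_def)
  have "ennreal rho * (\<integral>\<^sup>+ \<omega>. ennreal (lyapunov_at (Suc k) \<omega>) \<partial>paths)
      = (\<integral>\<^sup>+ \<omega>. ennreal rho * ennreal (lyapunov_at (Suc k) \<omega>) \<partial>paths)"
    by (rule nn_integral_cmult[symmetric]) measurable
  also have "\<dots> = (\<integral>\<^sup>+ \<omega>. ennreal (rho * lyapunov_at (Suc k) \<omega>) \<partial>paths)"
    using rho_gt_1 lyapunov_at_nonneg by (simp add: ennreal_mult)
  also have "\<dots> = (\<integral>\<^sup>+ \<omega>. (\<integral>\<^sup>+ \<xi>. ennreal (rho * lyapunov_at (Suc k) (fun_upd \<omega> (Suc k) \<xi>)) \<partial>D) \<partial>paths)"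
    by (rule nn_integral_PiM_split_coordinate) (auto intro: prob_space_D)
  also have "\<dots> \<le> (\<integral>\<^sup>+ \<omega>. (ennreal (lyapunov_at k \<omega>) + ennreal (c + 4 * tau\<^sup>2 * noise_sq k \<omega>)) \<partial>paths)"
  proof (rule nn_integral_mono)
    fix \<omega>
    have "ennreal (lyapunov_at k \<omega> + 4 * tau\<^sup>2 * noise_sq k \<omega> + c)
        = ennreal (lyapunov_at k \<omega>) + ennreal (c + 4 * tau\<^sup>2 * noise_sq k \<omega>)"
      using lyapunov_at_nonneg[of k \<omega>] noise_sq_nonneg[of k \<omega>] c
      by (simp add: ennreal_plus[symmetric] algebra_simps del: ennreal_plus)
    then show "(\<integral>\<^sup>+ \<xi>. ennreal (rho * lyapunov_at (Suc k) (fun_upd \<omega> (Suc k) \<xi>)) \<partial>D)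
        \<le> ennreal (lyapunov_at k \<omega>) + ennreal (c + 4 * tau\<^sup>2 * noise_sq k \<omega>)"
      using conditional_lyapunov_at_Suc_le[of k \<omega>] by (simp add: c_def add.assoc)
  qed
  also have "\<dots> = (\<integral>\<^sup>+ \<omega>. ennreal (lyapunov_at k \<omega>) \<partial>paths) + (\<integral>\<^sup>+ \<omega>. ennreal (c + 4 * tau\<^sup>2 * noise_sq k \<omega>) \<partial>paths)"
    by (rule nn_integral_add) measurable
  also have "\<dots> \<le> (\<integral>\<^sup>+ \<omega>. ennreal (lyapunov_at k \<omega>) \<partial>paths) + ennreal (c + 4 * tau\<^sup>2 * sigma\<^sup>2)"
    using c expected_noise_sq_le by (intro add_left_mono paths.nn_integral_affine_le) (auto simp: noise_sq_nonneg)
  finally show ?thesis by (simp add: c_def algebra_simps)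
qed

lemma expected_lyapunov_at_le:
  "(\<integral>\<^sup>+ \<omega>. ennreal (lyapunov_at k \<omega>) \<partial>paths) \<le> ennreal ((norm (z0 - zs))\<^sup>2 / rho ^ Suc k + noise_floor)"
proof (induction k)
  case 0
  have floor: "4 * tau\<^sup>2 * sigma\<^sup>2 \<le> noise_floor"
  proof -
    have "((rho - 1) * 4) * (tau\<^sup>2 * sigma\<^sup>2) \<le> (16 + 8 * (rho - 1)) * (tau\<^sup>2 * sigma\<^sup>2)"
      using rho_gt_1 by (intro mult_right_mono) auto
    moreover have "0 \<le> tau * delta\<^sup>2 / mu" using tau_pos mu_pos by simp
    ultimately have "(rho - 1) * (4 * tau\<^sup>2 * sigma\<^sup>2) \<le> (rho - 1) * noise_floor"
      unfolding noise_floor_mult_eq by (simp add: algebra_simps)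
    then show ?thesis using rho_gt_1 by simp
  qed
  have "(\<integral>\<^sup>+ \<omega>. ennreal (lyapunov_at 0 \<omega>) \<partial>paths)
      \<le> (\<integral>\<^sup>+ \<omega>. ennreal ((norm (z0 - zs))\<^sup>2 / rho + 4 * tau\<^sup>2 * noise_sq 0 \<omega>) \<partial>paths)"
    using lyapunov_at_0_le rho_gt_1
    by (intro nn_integral_mono ennreal_leI) (simp add: field_simps)
  also have "\<dots> \<le> ennreal ((norm (z0 - zs))\<^sup>2 / rho + 4 * tau\<^sup>2 * sigma\<^sup>2)"
    using rho_gt_1 expected_noise_sq_le by (intro paths.nn_integral_affine_le) (auto simp: noise_sq_nonneg)
  also have "\<dots> \<le> ennreal ((norm (z0 - zs))\<^sup>2 / rho ^ Suc 0 + noise_floor)"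
    using floor by (intro ennreal_leI) simp
  finally show ?case .
next
  case (Suc k)
  define R where "R = (norm (z0 - zs))\<^sup>2 / rho ^ Suc k"
  define c where "c = tau * delta\<^sup>2 / mu + (12 + 4 * rho) * tau\<^sup>2 * sigma\<^sup>2"
  have nonneg: "0 \<le> R" "0 \<le> c" "0 \<le> noise_floor"
    using rho_gt_1 tau_pos mu_pos noise_floor_nonneg by (simp_all add: R_def c_def)
  have c_le: "c \<le> (rho - 1) * noise_floor"
  proof -
    have "(12 + 4 * rho) * (tau\<^sup>2 * sigma\<^sup>2) \<le> (16 + 8 * (rho - 1)) * (tau\<^sup>2 * sigma\<^sup>2)"
      using rho_gt_1 by (intro mult_right_mono) auto
    then show ?thesis unfolding noise_floor_mult_eq c_def by (simp add: algebra_simps)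
  qed
  have "ennreal rho * (\<integral>\<^sup>+ \<omega>. ennreal (lyapunov_at (Suc k) \<omega>) \<partial>paths) \<le> ennreal (R + noise_floor) + ennreal c"
    using expected_lyapunov_at_Suc_le[of k] Suc.IH unfolding c_def R_def
    by (meson add_right_mono order_trans)
  also have "\<dots> = ennreal (R + noise_floor + c)"
    using nonneg by (simp add: ennreal_plus)
  finally have "(\<integral>\<^sup>+ \<omega>. ennreal (lyapunov_at (Suc k) \<omega>) \<partial>paths) \<le> ennreal ((R + noise_floor + c) / rho)"
    using rho_gt_1 nonneg by (intro ennreal_le_divide_of_mult_le) auto
  also have "\<dots> \<le> ennreal ((norm (z0 - zs))\<^sup>2 / rho ^ Suc (Suc k) + noise_floor)"
  proof (rule ennreal_leI)
    have "(noise_floor + c) / rho \<le> noise_floor" using c_le rho_gt_1 by (simp add: field_simps)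
    moreover have "(R + noise_floor + c) / rho = (norm (z0 - zs))\<^sup>2 / rho ^ Suc (Suc k) + (noise_floor + c) / rho"
      by (simp add: R_def add_divide_distrib)
    ultimately show "(R + noise_floor + c) / rho \<le> (norm (z0 - zs))\<^sup>2 / rho ^ Suc (Suc k) + noise_floor"
      by simp
  qed
  finally show ?case .
qed

lemma expected_dist_sq_le:
  "(\<integral>\<^sup>+ \<omega>. ennreal ((norm (iter k \<omega> - zs))\<^sup>2) \<partial>paths) \<le> ennreal (2 * (norm (z0 - zs))\<^sup>2 / rho ^ k + 2 * noise_floor)"
proof (cases k)
  case 0
  have "ennreal ((norm (z0 - zs))\<^sup>2) \<le> ennreal (2 * (norm (z0 - zs))\<^sup>2 / rho ^ k + 2 * noise_floor)"
    using noise_floor_nonneg by (intro ennreal_leI) (simp add: 0)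
  then show ?thesis by (simp add: 0 paths.emeasure_space_1)
next
  case (Suc k')
  have "(\<integral>\<^sup>+ \<omega>. ennreal ((norm (iter k \<omega> - zs))\<^sup>2) \<partial>paths)
      \<le> (\<integral>\<^sup>+ \<omega>. ennreal 2 * ennreal (lyapunov_at k' \<omega>) \<partial>paths)"
  proof (rule nn_integral_mono)
    fix \<omega>
    have "ennreal ((norm (iter k \<omega> - zs))\<^sup>2) \<le> ennreal (2 * lyapunov_at k' \<omega>)"
      using dist_sq_le_lyapunov_at by (intro ennreal_leI) (simp add: Suc)
    then show "ennreal ((norm (iter k \<omega> - zs))\<^sup>2) \<le> ennreal 2 * ennreal (lyapunov_at k' \<omega>)"
      using lyapunov_at_nonneg by (simp add: ennreal_mult)
  qed
  also have "\<dots> = ennreal 2 * (\<integral>\<^sup>+ \<omega>. ennreal (lyapunov_at k' \<omega>) \<partial>paths)"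
    by (rule nn_integral_cmult) measurable
  also have "\<dots> \<le> ennreal 2 * ennreal ((norm (z0 - zs))\<^sup>2 / rho ^ k + noise_floor)"
    using expected_lyapunov_at_le[of k'] by (intro mult_left_mono) (simp_all add: Suc)
  also have "\<dots> = ennreal (2 * ((norm (z0 - zs))\<^sup>2 / rho ^ k + noise_floor))"
    using noise_floor_nonneg rho_gt_1 by (intro ennreal_mult[symmetric]) auto
  also have "\<dots> = ennreal (2 * (norm (z0 - zs))\<^sup>2 / rho ^ k + 2 * noise_floor)"
    by (rule arg_cong[where f=ennreal]) (simp add: algebra_simps)
  finally show ?thesis .
qed

end

lemma continuous_on_comp_closest_point:
  assumes "closed Z" "convex Z" "Z \<noteq> {}" and "continuous_on Z F"
  shows "continuous_on UNIV (\<lambda>z. F (closest_point Z z))"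
  using assms
  by (intro continuous_on_compose2[OF _ continuous_on_closest_point]) (auto intro: closest_point_in_set)

lemma extra_momentum_parameters:
  fixes rho L \<alpha> \<gamma> \<tau> :: real
  assumes rho: "1 < rho" and L: "0 < L" and "0 \<le> \<gamma>" "0 \<le> \<tau>"
    and ratio: "\<alpha> / \<tau> = rho" and step_size: "rho \<le> 1 / (8 * \<tau>\<^sup>2 * L\<^sup>2 + 2 * \<gamma>)"
  shows "0 < \<tau>" and "\<alpha> = rho * \<tau>" and "8 * \<tau>\<^sup>2 * L\<^sup>2 + 2 * \<gamma> \<le> 1 / rho"
proof -
  show tau: "0 < \<tau>" using assms by (cases "\<tau> = 0") auto
  then show "\<alpha> = rho * \<tau>" using ratio by (simp add: field_simps)
  have "0 < 8 * \<tau>\<^sup>2 * L\<^sup>2 + 2 * \<gamma>" using tau L assms(3) by (simp add: add_pos_nonneg)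
  then show "8 * \<tau>\<^sup>2 * L\<^sup>2 + 2 * \<gamma> \<le> 1 / rho" using step_size rho by (simp add: field_simps)
qed

theorem theorem2:
  fixes Z :: "'a::euclidean_space set"
    and F :: "'a \<Rightarrow> 'a"
    and D :: "'b measure"
    and Fh :: "'a \<Rightarrow> 'b \<Rightarrow> 'a"
    and \<mu> L \<delta> \<sigma> \<alpha> \<gamma> \<tau> \<theta> :: real
    and zstar z0 :: 'a
  assumes Z: "closed Z" "convex Z" "Z \<noteq> {}"
    and mu_L: "0 < \<mu>" "\<mu> \<le> L"
    and strmon: "\<forall>z\<in>Z. \<forall>z'\<in>Z. (F z - F z') \<bullet> (z - z') \<ge> \<mu> * (norm (z - z'))\<^sup>2"
    and lip: "\<forall>z\<in>Z. \<forall>z'\<in>Z. norm (F z - F z') \<le> L * norm (z - z')"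
    and sol: "zstar \<in> Z" "\<forall>z\<in>Z. F zstar \<bullet> (z - zstar) \<ge> 0"
    and D: "prob_space D"
    and meas: "(\<lambda>p. Fh (fst p) (snd p)) \<in> borel_measurable (borel \<Otimes>\<^sub>M D)"
    and noise: "\<delta> \<ge> 0" "\<sigma> \<ge> 0"
      "\<forall>z\<in>Z. (\<integral>\<^sup>+ \<xi>. ennreal (norm (Fh z \<xi> - F z)) \<partial>D) \<le> ennreal \<delta>"
      "\<forall>z\<in>Z. (\<integral>\<^sup>+ \<xi>. ennreal ((norm (Fh z \<xi> - F z))\<^sup>2) \<partial>D) \<le> ennreal (\<sigma>\<^sup>2)"
    and z0: "z0 \<in> Z"
    and params: "\<alpha> \<ge> 0" "\<gamma> \<ge> 0" "\<tau> \<ge> 0" "0 < \<theta>" "\<theta> \<le> 1"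
      "1 + \<alpha> * \<mu> - \<gamma> \<ge> 1 + \<theta> / (L / \<mu>)"
      "\<alpha> / \<tau> = 1 + \<theta> / (L / \<mu>)"
      "1 / (8 * \<tau>\<^sup>2 * L\<^sup>2 + 2 * \<gamma>) \<ge> 1 + \<theta> / (L / \<mu>)"
  shows "(\<integral>\<^sup>+ \<omega>. ennreal ((norm (em_z Z Fh \<alpha> \<gamma> \<tau> z0 k \<omega> - zstar))\<^sup>2)
            \<partial>(\<Pi>\<^sub>M j\<in>(UNIV::nat set). D))
         \<le> ennreal (2 * (norm (z0 - zstar))\<^sup>2 / (1 + \<theta> / (L / \<mu>)) ^ k
                    + ((L / \<mu>) / \<theta> + 1) * 32 * \<tau>\<^sup>2 * \<sigma>\<^sup>2
                    + 2 * (L / \<mu>) * \<alpha> * \<delta>\<^sup>2 / (\<theta> * \<mu>))"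
proof -
  define rho where "rho = 1 + \<theta> / (L / \<mu>)"
  have L: "0 < L" using mu_L by simp
  have rho: "1 < rho" using mu_L params(4) by (simp add: rho_def)
  note tau_al_step = extra_momentum_parameters[OF rho L params(2,3) params(7,8)[folded rho_def]]
  text \<open>The locale is applied to \<open>F \<circ> P\<^sub>Z\<close>, which agrees with \<open>F\<close> on \<open>Z\<close> and is continuous
    everywhere; this makes the noise terms measurable.\<close>
  have "continuous_on Z F"
    using lip L by (intro lipschitz_on_continuous_on[of L] lipschitz_onI) (auto simp: dist_norm)
  then interpret em_stochastic Z "\<lambda>z. F (closest_point Z z)" \<mu> L \<alpha> \<gamma> \<tau> rho zstar D Fh z0 \<delta> \<sigma>
    using Z mu_L strmon lip sol D meas noise z0 params rho tau_al_step
    by (intro em_stochastic.intro em_setting.intro em_stochastic_axioms.intro)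
      (simp_all add: closest_point_self rho_def continuous_on_comp_closest_point)
  have "(\<integral>\<^sup>+ \<omega>. ennreal ((norm (iter k \<omega> - zstar))\<^sup>2) \<partial>paths)
      \<le> ennreal (2 * (norm (z0 - zstar))\<^sup>2 / rho ^ k + 2 * noise_floor)"
    by (rule expected_dist_sq_le)
  also have "\<dots> \<le> ennreal (2 * (norm (z0 - zstar))\<^sup>2 / rho ^ k
      + (2 * \<alpha> * \<delta>\<^sup>2 / \<mu> + 32 * rho * \<tau>\<^sup>2 * \<sigma>\<^sup>2) / (rho - 1))"
    using two_noise_floor_le by (intro ennreal_leI) simp
  also have "(2 * \<alpha> * \<delta>\<^sup>2 / \<mu> + 32 * rho * \<tau>\<^sup>2 * \<sigma>\<^sup>2) / (rho - 1)
      = ((L / \<mu>) / \<theta> + 1) * 32 * \<tau>\<^sup>2 * \<sigma>\<^sup>2 + 2 * (L / \<mu>) * \<alpha> * \<delta>\<^sup>2 / (\<theta> * \<mu>)"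
    using mu_L L params(4) by (simp add: rho_def field_simps)
  finally show ?thesis by (simp add: rho_def add.assoc)
qed

end
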